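(* Let $e\ge1$ and let $x_0$ be any vertex of $X_{PGL_2(F)}$. The stabiliser $\hat K_{x_0}=\{g\in\hat G^{(e)}: g(x_0)=x_0\}$ acts transitively on the set of ends of $X_{PGL_2(F)}$.
   Context: Let $F$ be a non-archimedean local field with ring of integers $\mathfrak{o}$, uniformizer $\varpi$, and finite residue field of cardinality $q$. $X=X_{PGL_2(F)}$ is the Bruhat–Tits tree of $PGL_2(F)$: its vertices are homothety classes $[L]$ (under $F^\times$) of $\mathfrak{o}$-lattices $L\subset F^2$, and $[L],[L']$ are joined by an edge iff there are representatives with $\varpi L\subsetneq L'\subsetneq L$; it is a $(q+1)$-regular tree. $d$ is the path-length distance on vertices; $\mathrm{Aut}(X)$ is the group of distance-preserving bijections of the vertex set, with the topology of pointwise convergence. $GL_2(F)$ acts on lattices through its linear action on $F^2$, the centre acts trivially, and this gives an embedding $PGL_2(F)\hookrightarrow\mathrm{Aut}(X)$. For an edge $\eta=\{x_1,x_2\}$ and $e\ge1$, $B(\eta,e)=\{y: \min(d(y,x_1),d(y,x_2))\le e\}$. Define $\hat G^{(e)}=\{g\in\mathrm{Aut}(X):\ \text{for every edge }\eta\ \text{there is } g'\in PGL_2(F)\text{ with } g|_{B(\eta,e)}=g'|_{B(\eta,e)}\}$. An end is an equivalence class of infinite paths $(y_i)_{i\in\mathbb{N}}$ (distinct vertices, consecutive ones adjacent), two paths being equivalent if they agree after a shift of index from some point on; automorphisms act on ends. *)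

theory Defs
  imports Main
begin

text \<open>A valuation v on the field 'a; only its values on nonzero elements matter.
  vge v x k means "x = 0 or v x >= k", i.e. x lies in the ideal pi^k o.\<close>

definition vge :: "('a::field \<Rightarrow> int) \<Rightarrow> 'a \<Rightarrow> int \<Rightarrow> bool" where
  "vge v x k \<longleftrightarrow> x = 0 \<or> k \<le> v x"

definition val_ring :: "('a::field \<Rightarrow> int) \<Rightarrow> 'a set" where
  "val_ring v = {x. vge v x 0}"

definition nonarch_local_field :: "('a::field \<Rightarrow> int) \<Rightarrow> bool" where
  "nonarch_local_field v \<longleftrightarrow>
     (\<forall>x y. x \<noteq> 0 \<longrightarrow> y \<noteq> 0 \<longrightarrow> v (x * y) = v x + v y)
   \<and> (\<forall>x y. x \<noteq> 0 \<longrightarrow> y \<noteq> 0 \<longrightarrow> x + y \<noteq> 0 \<longrightarrow> min (v x) (v y) \<le> v (x + y))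
   \<and> (\<exists>p. p \<noteq> 0 \<and> v p = 1)
   \<and> (\<exists>R. finite R \<and> R \<subseteq> val_ring v \<and> (\<forall>x\<in>val_ring v. \<exists>r\<in>R. vge v (x - r) 1))
   \<and> (\<forall>s :: nat \<Rightarrow> 'a. (\<forall>k::int. \<exists>N. \<forall>m\<ge>N. \<forall>n\<ge>N. vge v (s m - s n) k)
         \<longrightarrow> (\<exists>l. \<forall>k::int. \<exists>N. \<forall>n\<ge>N. vge v (s n - l) k))"

definition smul2 :: "'a::field \<Rightarrow> 'a \<times> 'a \<Rightarrow> 'a \<times> 'a" where
  "smul2 c u = (c * fst u, c * snd u)"

definition is_lattice :: "('a::field \<Rightarrow> int) \<Rightarrow> ('a \<times> 'a) set \<Rightarrow> bool" where
  "is_lattice v L \<longleftrightarrow> (\<exists>u w. fst u * snd w - snd u * fst w \<noteq> 0 \<and>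
      L = {(a * fst u + b * fst w, a * snd u + b * snd w) | a b. a \<in> val_ring v \<and> b \<in> val_ring v})"

definition hclass :: "('a::field \<times> 'a) set \<Rightarrow> ('a \<times> 'a) set set" where
  "hclass L = {smul2 c ` L | c. c \<noteq> 0}"

definition tree_V :: "('a::field \<Rightarrow> int) \<Rightarrow> ('a \<times> 'a) set set set" where
  "tree_V v = {hclass L | L. is_lattice v L}"

definition tree_adj :: "('a::field \<Rightarrow> int) \<Rightarrow> ('a \<times> 'a) set set \<Rightarrow> ('a \<times> 'a) set set \<Rightarrow> bool" where
  "tree_adj v x y \<longleftrightarrow> x \<in> tree_V v \<and> y \<in> tree_V v \<and>
     (\<exists>p L L'. p \<noteq> 0 \<and> v p = 1 \<and> L \<in> x \<and> L' \<in> y \<and> smul2 p ` L \<subset> L' \<and> L' \<subset> L)"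

definition tree_d :: "('a::field \<Rightarrow> int) \<Rightarrow> ('a \<times> 'a) set set \<Rightarrow> ('a \<times> 'a) set set \<Rightarrow> nat" where
  "tree_d v x y = (LEAST n. (x, y) \<in> {(a, b). tree_adj v a b} ^^ n)"

definition tree_Aut :: "('a::field \<Rightarrow> int) \<Rightarrow> (('a \<times> 'a) set set \<Rightarrow> ('a \<times> 'a) set set) set" where
  "tree_Aut v = {g. bij_betw g (tree_V v) (tree_V v) \<and>
      (\<forall>x\<in>tree_V v. \<forall>y\<in>tree_V v. tree_d v (g x) (g y) = tree_d v x y)}"

text \<open>A matrix (a,b,c,d) stands for [[a,b],[c,d]], acting on column vectors.\<close>
definition mat_act :: "'a::field \<times> 'a \<times> 'a \<times> 'a \<Rightarrow> 'a \<times> 'a \<Rightarrow> 'a \<times> 'a" where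
  "mat_act M u = (case M of (a, b, c, d) \<Rightarrow> (a * fst u + b * snd u, c * fst u + d * snd u))"

definition mat_det :: "'a::field \<times> 'a \<times> 'a \<times> 'a \<Rightarrow> 'a" where
  "mat_det M = (case M of (a, b, c, d) \<Rightarrow> a * d - b * c)"

definition vert_act :: "'a::field \<times> 'a \<times> 'a \<times> 'a \<Rightarrow> ('a \<times> 'a) set set \<Rightarrow> ('a \<times> 'a) set set" where
  "vert_act M x = (\<lambda>L. mat_act M ` L) ` x"

definition PGL2_tree :: "((('a::field \<times> 'a) set set) \<Rightarrow> ('a \<times> 'a) set set) set" where
  "PGL2_tree = {vert_act M | M. mat_det M \<noteq> 0}"

definition Ghat :: "('a::field \<Rightarrow> int) \<Rightarrow> nat \<Rightarrow> (('a \<times> 'a) set set \<Rightarrow> ('a \<times> 'a) set set) set" where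
  "Ghat v e = {g \<in> tree_Aut v. \<forall>x1 x2. tree_adj v x1 x2 \<longrightarrow>
      (\<exists>g'\<in>PGL2_tree. \<forall>y\<in>tree_V v.
          min (tree_d v y x1) (tree_d v y x2) \<le> e \<longrightarrow> g y = g' y)}"

definition tree_ray :: "('a::field \<Rightarrow> int) \<Rightarrow> (nat \<Rightarrow> ('a \<times> 'a) set set) \<Rightarrow> bool" where
  "tree_ray v y \<longleftrightarrow> (\<forall>n. y n \<in> tree_V v) \<and> inj y \<and> (\<forall>n. tree_adj v (y n) (y (Suc n)))"

definition same_end :: "(nat \<Rightarrow> 'b) \<Rightarrow> (nat \<Rightarrow> 'b) \<Rightarrow> bool" where
  "same_end y z \<longleftrightarrow> (\<exists>i j. \<forall>n. y (i + n) = z (j + n))"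

end

theory Submission
  imports Defs
begin

text \<open>Elements of \<open>PGL\<^sub>2(F)\<close> belong to \<open>Ghat v e\<close> trivially, and the stabiliser of
  \<open>x\<^sub>0 = [L\<^sub>0]\<close> there contains \<open>GL(L\<^sub>0)\<close>, which already acts transitively on ends.
  The neighbours of \<open>[\<langle>a, b\<rangle>]\<close> are \<open>[\<langle>a + r b, \<pi> b\<rangle>]\<close> (\<open>r \<in> \<o>\<close>) and \<open>[\<langle>b, \<pi> a\<rangle>]\<close>, so a ray
  without backtracking runs through \<open>[\<langle>a + s\<^sub>n b, \<pi>\<^sup>n b\<rangle>]\<close> with \<open>s\<^sub>n\<^sub>+\<^sub>1 \<equiv> s\<^sub>n mod \<pi>\<^sup>n\<close>;
  by completeness \<open>s\<^sub>n \<rightarrow> s\<close>, and the ray is \<open>[\<langle>w, \<pi>\<^sup>n b\<rangle>]\<close> with \<open>w = a + s b\<close>. Rescaling \<open>w\<close> to a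
  primitive vector of \<open>L\<^sub>0\<close> and completing it to a basis, every ray is eventually of this form
  with \<open>L\<^sub>0 = \<langle>w, b\<rangle>\<close>; the matrix sending one such basis of \<open>L\<^sub>0\<close> to another fixes \<open>x\<^sub>0\<close> and
  moves the first ray onto a tail of the second.\<close>

section \<open>Valuation calculus\<close>

locale local_field =
  fixes v :: "'a::field \<Rightarrow> int"
  assumes local_field: "nonarch_local_field v"
begin

lemma v_mult: "x \<noteq> 0 \<Longrightarrow> y \<noteq> 0 \<Longrightarrow> v (x * y) = v x + v y"
  using local_field unfolding nonarch_local_field_def by blast

lemma v_add: "x \<noteq> 0 \<Longrightarrow> y \<noteq> 0 \<Longrightarrow> x + y \<noteq> 0 \<Longrightarrow> min (v x) (v y) \<le> v (x + y)"
  using local_field unfolding nonarch_local_field_def by blast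

lemma uniformizer_exists: "\<exists>p. p \<noteq> 0 \<and> v p = 1"
  using local_field unfolding nonarch_local_field_def by blast

lemma cauchy_has_limit:
  fixes s :: "nat \<Rightarrow> 'a"
  assumes "\<forall>k::int. \<exists>N. \<forall>m\<ge>N. \<forall>n\<ge>N. vge v (s m - s n) k"
  shows "\<exists>l. \<forall>k::int. \<exists>N. \<forall>n\<ge>N. vge v (s n - l) k"
  using local_field assms unfolding nonarch_local_field_def by blast

lemma v_one [simp]: "v 1 = 0"
  using v_mult[of 1 1] by simp

lemma v_inverse: "x \<noteq> 0 \<Longrightarrow> v (inverse x) = - v x"
  using v_mult[of x "inverse x"] by simp

lemma v_minus [simp]: "v (- x) = v x"
proof -
  have "v (-1) = 0"
    using v_mult[of "-1" "-1"] by simp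
  then show ?thesis
    using v_mult[of "-1" x] by (cases "x = 0") simp_all
qed

lemma v_divide: "x \<noteq> 0 \<Longrightarrow> y \<noteq> 0 \<Longrightarrow> v (x / y) = v x - v y"
  using v_mult[of x "inverse y"] v_inverse[of y] by (simp add: divide_inverse)

lemma vge_zero [simp]: "vge v 0 k"
  unfolding vge_def by simp

lemma vge_mono: "vge v x k \<Longrightarrow> m \<le> k \<Longrightarrow> vge v x m"
  unfolding vge_def by auto

lemma vge_minus [simp]: "vge v (- x) k \<longleftrightarrow> vge v x k"
  unfolding vge_def by simp

lemma vge_add: "vge v x k \<Longrightarrow> vge v y k \<Longrightarrow> vge v (x + y) k"
  using v_add[of x y] unfolding vge_def by (cases "x = 0 \<or> y = 0 \<or> x + y = 0") auto

lemma vge_diff: "vge v x k \<Longrightarrow> vge v y k \<Longrightarrow> vge v (x - y) k"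
  using vge_add[of x k "- y"] by simp

lemma vge_mult: "vge v x k \<Longrightarrow> vge v y m \<Longrightarrow> vge v (x * y) (k + m)"
  unfolding vge_def using v_mult[of x y] by (cases "x = 0"; cases "y = 0") auto

abbreviation \<O> :: "'a set" where "\<O> \<equiv> val_ring v"

lemma val_ring_iff: "x \<in> \<O> \<longleftrightarrow> vge v x 0"
  unfolding val_ring_def by simp

lemma val_ring_zero [simp]: "0 \<in> \<O>" and val_ring_one [simp]: "1 \<in> \<O>"
  unfolding val_ring_iff vge_def by simp_all

lemma val_ring_add: "x \<in> \<O> \<Longrightarrow> y \<in> \<O> \<Longrightarrow> x + y \<in> \<O>"
  and val_ring_diff: "x \<in> \<O> \<Longrightarrow> y \<in> \<O> \<Longrightarrow> x - y \<in> \<O>"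
  and val_ring_minus: "x \<in> \<O> \<Longrightarrow> - x \<in> \<O>"
  and val_ring_mult: "x \<in> \<O> \<Longrightarrow> y \<in> \<O> \<Longrightarrow> x * y \<in> \<O>"
  unfolding val_ring_iff using vge_add vge_diff vge_mult[of x 0 y 0] by simp_all

definition val_unit :: "'a \<Rightarrow> bool" where
  "val_unit x \<longleftrightarrow> x \<noteq> 0 \<and> v x = 0"

lemma val_unit_val_ring: "val_unit x \<Longrightarrow> x \<in> \<O>"
  unfolding val_unit_def val_ring_iff vge_def by simp

lemma val_unit_inverse: "val_unit x \<Longrightarrow> inverse x \<in> \<O>"
  unfolding val_unit_def val_ring_iff vge_def by (simp add: v_inverse)

lemma divide_unit_val_ring: "val_unit u \<Longrightarrow> x \<in> \<O> \<Longrightarrow> x / u \<in> \<O>"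
  using val_unit_inverse by (simp add: divide_inverse val_ring_mult)

lemma val_unit_divide: "x \<noteq> 0 \<Longrightarrow> y \<noteq> 0 \<Longrightarrow> v x = v y \<Longrightarrow> val_unit (x / y)"
  unfolding val_unit_def by (simp add: v_divide)

lemma val_ring_cases: "x \<in> \<O> \<Longrightarrow> val_unit x \<or> vge v x 1"
  unfolding val_ring_iff vge_def val_unit_def by auto

lemma vge_one_divide: "q \<noteq> 0 \<Longrightarrow> v q = 1 \<Longrightarrow> vge v x 1 \<Longrightarrow> x / q \<in> \<O>"
  unfolding val_ring_iff vge_def by (cases "x = 0") (auto simp: v_divide)

definition unif :: 'a where
  "unif = (SOME p. p \<noteq> 0 \<and> v p = 1)"

lemma unif: "unif \<noteq> 0" "v unif = 1"
  using someI_ex[OF uniformizer_exists] unfolding unif_def by auto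

lemma unif_power: "unif ^ k \<noteq> 0" "v (unif ^ k) = int k"
  by (induction k) (auto simp: v_mult unif)

lemma vge_divide_unif_power: "vge v x (int k) \<Longrightarrow> x / unif ^ k \<in> \<O>"
  unfolding val_ring_iff vge_def using unif_power[of k] by (auto simp: v_divide)

lemma vge_mult_unif_power: "t \<in> \<O> \<Longrightarrow> vge v (t * unif ^ k) (int k)"
  unfolding val_ring_iff vge_def using unif_power[of k] by (auto simp: v_mult)

end

section \<open>Lattices spanned by a basis\<close>

definition lin :: "'a::field \<Rightarrow> 'a \<times> 'a \<Rightarrow> 'a \<Rightarrow> 'a \<times> 'a \<Rightarrow> 'a \<times> 'a" where
  "lin c a d b = (c * fst a + d * fst b, c * snd a + d * snd b)"

definition det2 :: "'a::field \<times> 'a \<Rightarrow> 'a \<times> 'a \<Rightarrow> 'a" where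
  "det2 a b = fst a * snd b - snd a * fst b"

lemma lin_lin: "lin x (lin \<alpha> a \<beta> b) y (lin \<gamma> a \<delta> b) = lin (x * \<alpha> + y * \<gamma>) a (x * \<beta> + y * \<delta>) b"
  by (simp add: lin_def algebra_simps)

lemma lin_1_0 [simp]: "lin 1 a 0 b = a" and lin_0_1 [simp]: "lin 0 a 1 b = b"
  by (simp_all add: lin_def)

lemma smul2_lin: "smul2 c (lin x a y b) = lin x (smul2 c a) y (smul2 c b)"
  by (simp add: lin_def smul2_def algebra_simps)

lemma smul2_one [simp]: "smul2 1 x = x"
  by (simp add: smul2_def)

lemma smul2_smul2: "smul2 c (smul2 d x) = smul2 (c * d) x"
  by (simp add: smul2_def algebra_simps)

lemma det2_swap: "det2 b a = - det2 a b"
  by (simp add: det2_def algebra_simps)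

lemma det2_shear: "det2 (lin 1 a t b) b = det2 a b"
  by (simp add: det2_def lin_def algebra_simps)

lemma det2_smul2_right: "det2 a (smul2 c b) = c * det2 a b"
  by (simp add: det2_def smul2_def algebra_simps)

lemma det2_smul2: "det2 (smul2 c a) (smul2 c b) = c * c * det2 a b"
  by (simp add: det2_def smul2_def algebra_simps)

lemma det2_lin: "det2 (lin \<alpha> a \<beta> b) (lin \<gamma> a \<delta> b) = (\<alpha> * \<delta> - \<beta> * \<gamma>) * det2 a b"
  by (simp add: lin_def det2_def algebra_simps)

lemma lin_coordinates:
  assumes "det2 w b \<noteq> 0"
  shows "m = lin (det2 m b / det2 w b) w (det2 w m / det2 w b) b"
proof -
  have "det2 w b * fst m = det2 m b * fst w + det2 w m * fst b"
    "det2 w b * snd m = det2 m b * snd w + det2 w m * snd b"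
    by (simp_all add: det2_def algebra_simps)
  then show ?thesis
    using assms by (simp add: lin_def prod_eq_iff field_simps)
qed

context local_field
begin

definition lat :: "'a \<times> 'a \<Rightarrow> 'a \<times> 'a \<Rightarrow> ('a \<times> 'a) set" where
  "lat a b = {lin \<alpha> a \<beta> b | \<alpha> \<beta>. \<alpha> \<in> \<O> \<and> \<beta> \<in> \<O>}"

lemma is_lattice_iff: "is_lattice v L \<longleftrightarrow> (\<exists>u w. det2 u w \<noteq> 0 \<and> L = lat u w)"
  unfolding is_lattice_def lat_def lin_def det2_def by simp

lemma lat_memI: "\<alpha> \<in> \<O> \<Longrightarrow> \<beta> \<in> \<O> \<Longrightarrow> lin \<alpha> a \<beta> b \<in> lat a b"
  unfolding lat_def by blast

lemma lat_memE:
  assumes "x \<in> lat a b"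
  obtains \<alpha> \<beta> where "\<alpha> \<in> \<O>" "\<beta> \<in> \<O>" "x = lin \<alpha> a \<beta> b"
  using assms unfolding lat_def by blast

lemma lat_basis: "a \<in> lat a b" "b \<in> lat a b"
  using lat_memI[of 1 0 a b] lat_memI[of 0 1 a b] by simp_all

lemma lat_lin_closed:
  "x \<in> lat a b \<Longrightarrow> y \<in> lat a b \<Longrightarrow> \<xi> \<in> \<O> \<Longrightarrow> \<eta> \<in> \<O> \<Longrightarrow> lin \<xi> x \<eta> y \<in> lat a b"
  by (elim lat_memE) (simp add: lin_lin lat_memI val_ring_add val_ring_mult)

lemma lat_subset: "c \<in> lat a b \<Longrightarrow> d \<in> lat a b \<Longrightarrow> lat c d \<subseteq> lat a b"
  by (blast elim: lat_memE intro: lat_lin_closed)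

lemma lat_eqI: "c \<in> lat a b \<Longrightarrow> d \<in> lat a b \<Longrightarrow> a \<in> lat c d \<Longrightarrow> b \<in> lat c d \<Longrightarrow> lat c d = lat a b"
  using lat_subset by blast

lemma lat_swap: "lat a b = lat b a"
  by (rule lat_eqI) (simp_all add: lat_basis)

lemma lat_shear: "t \<in> \<O> \<Longrightarrow> lat (lin 1 a t b) b = lat a b"
proof (rule lat_eqI)
  assume t: "t \<in> \<O>"
  then show "lin 1 a t b \<in> lat a b"
    by (simp add: lat_memI)
  have "a = lin 1 (lin 1 a t b) (- t) b"
    by (simp add: lin_def)
  then show "a \<in> lat (lin 1 a t b) b"
    using t by (metis val_ring_one val_ring_minus lat_memI)
qed (simp_all add: lat_basis)

lemma lat_unit_right: "val_unit u \<Longrightarrow> lat a (smul2 u b) = lat a b"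
proof (rule lat_eqI)
  assume u: "val_unit u"
  have "smul2 u b = lin 0 a u b"
    by (simp add: lin_def smul2_def)
  then show "smul2 u b \<in> lat a b"
    using u val_unit_val_ring by (metis val_ring_zero lat_memI)
  have "b = lin 0 a (inverse u) (smul2 u b)"
    using u unfolding val_unit_def by (simp add: lin_def smul2_def mult.assoc[symmetric])
  then show "b \<in> lat a (smul2 u b)"
    using u val_unit_inverse by (metis val_ring_zero lat_memI)
qed (simp_all add: lat_basis)

lemma lat_unit_left: "val_unit u \<Longrightarrow> lat (smul2 u a) b = lat a b"
  using lat_unit_right lat_swap by metis

lemma smul2_lat: "smul2 c ` lat a b = lat (smul2 c a) (smul2 c b)"
  unfolding lat_def smul2_lin[symmetric] by blast

section \<open>Vertices and their neighbours\<close>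

lemma hclass_memE:
  assumes "L \<in> hclass K"
  obtains c where "c \<noteq> 0" "L = smul2 c ` K"
  using assms unfolding hclass_def by blast

lemma hclass_smul2: "c \<noteq> 0 \<Longrightarrow> hclass (smul2 c ` K) = hclass K"
proof
  assume c: "c \<noteq> 0"
  show "hclass (smul2 c ` K) \<subseteq> hclass K"
    using c unfolding hclass_def by (auto simp: image_image smul2_smul2)
  show "hclass K \<subseteq> hclass (smul2 c ` K)"
  proof
    fix L assume "L \<in> hclass K"
    then obtain d where "d \<noteq> 0" "L = smul2 d ` K"
      by (rule hclass_memE)
    then have "d / c \<noteq> 0" "L = smul2 (d / c) ` (smul2 c ` K)"
      using c by (simp_all add: image_image smul2_smul2)
    then show "L \<in> hclass (smul2 c ` K)"
      unfolding hclass_def by blast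
  qed
qed

lemma hclass_eq: "L \<in> hclass K \<Longrightarrow> hclass L = hclass K"
  by (auto elim: hclass_memE simp: hclass_smul2)

lemma hclass_lat_smul2: "c \<noteq> 0 \<Longrightarrow> hclass (lat (smul2 c a) (smul2 c b)) = hclass (lat a b)"
  by (metis hclass_smul2 smul2_lat)

lemma tree_V_lat: "det2 a b \<noteq> 0 \<Longrightarrow> hclass (lat a b) \<in> tree_V v"
  unfolding tree_V_def is_lattice_iff by blast

lemma tree_V_latE:
  assumes "x \<in> tree_V v"
  obtains a b where "det2 a b \<noteq> 0" "x = hclass (lat a b)"
  using assms unfolding tree_V_def is_lattice_iff by blast

lemma tree_V_memE:
  assumes "x \<in> tree_V v" "L \<in> x"
  obtains u w where "det2 u w \<noteq> 0" "L = lat u w" "x = hclass L"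
proof -
  obtain a b where ab: "det2 a b \<noteq> 0" "x = hclass (lat a b)"
    using assms(1) by (rule tree_V_latE)
  then obtain c where c: "c \<noteq> 0" "L = smul2 c ` lat a b"
    using assms(2) by (auto elim: hclass_memE)
  show thesis
  proof
    show "det2 (smul2 c a) (smul2 c b) \<noteq> 0" "L = lat (smul2 c a) (smul2 c b)"
      using ab c by (simp_all add: det2_smul2 smul2_lat)
    show "x = hclass L"
      using ab c assms(2) hclass_eq by auto
  qed
qed

lemma lat_between:
  assumes q: "q \<noteq> 0" "v q = 1"
    and L': "L' = lat u w" "smul2 q ` lat a b \<subset> L'" "L' \<subset> lat a b"
    and z: "z \<in> L'" "z = lin \<alpha> a \<beta> b" "\<beta> \<in> \<O>" "val_unit \<alpha>"
  shows "L' = lat z (smul2 q b)"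
proof
  have "smul2 q b \<in> L'"
    using L'(2) lat_basis by blast
  then show "lat z (smul2 q b) \<subseteq> L'"
    using L'(1) lat_subset z(1) by blast
  have \<alpha>: "\<alpha> \<noteq> 0"
    using z(4) val_unit_def by blast
  show "L' \<subseteq> lat z (smul2 q b)"
  proof
    fix x assume x: "x \<in> L'"
    then obtain \<gamma> \<delta> where \<gamma>\<delta>: "\<gamma> \<in> \<O>" "\<delta> \<in> \<O>" "x = lin \<gamma> a \<delta> b"
      using L'(3) by (blast elim: lat_memE)
    define \<epsilon> where "\<epsilon> = \<delta> - \<gamma> * \<beta> / \<alpha>"
    have x_eq: "x = lin (\<gamma> / \<alpha>) z \<epsilon> b"
      using \<alpha> \<gamma>\<delta> z unfolding \<epsilon>_def by (simp add: lin_def prod_eq_iff field_simps)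
    have \<gamma>\<alpha>: "\<gamma> / \<alpha> \<in> \<O>"
      using divide_unit_val_ring \<gamma>\<delta> z by blast
    have "\<epsilon> \<in> \<O>"
      unfolding \<epsilon>_def using \<gamma>\<delta> z divide_unit_val_ring by (simp add: val_ring_diff val_ring_mult)
    then consider "vge v \<epsilon> 1" | "val_unit \<epsilon>"
      using val_ring_cases by blast
    then show "x \<in> lat z (smul2 q b)"
    proof cases
      case 1
      have "x = lin (\<gamma> / \<alpha>) z (\<epsilon> / q) (smul2 q b)"
        using x_eq q by (simp add: lin_def smul2_def)
      then show ?thesis
        using \<gamma>\<alpha> vge_one_divide[OF q 1] lat_memI by metis
    next
      case 2
      \<comment> \<open>then \<open>b\<close>, hence \<open>a\<close>, lies in \<open>L'\<close>, contradicting \<open>L' \<subset> lat a b\<close>\<close>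
      then have \<epsilon>: "\<epsilon> \<noteq> 0"
        unfolding val_unit_def by blast
      have "b = lin (inverse \<epsilon>) x (- (\<gamma> / \<alpha>) / \<epsilon>) z"
        using x_eq \<epsilon> by (simp add: lin_def prod_eq_iff field_simps)
      then have b: "b \<in> L'"
        using L'(1) x z(1) 2 \<gamma>\<alpha> val_unit_inverse divide_unit_val_ring
        by (metis lat_lin_closed val_ring_minus)
      have "a = lin (inverse \<alpha>) z (- \<beta> / \<alpha>) b"
        using \<alpha> z(2) by (simp add: lin_def prod_eq_iff field_simps)
      then have "a \<in> L'"
        using L'(1) z b val_unit_inverse divide_unit_val_ring
        by (metis lat_lin_closed val_ring_minus minus_divide_left)
      then have "lat a b \<subseteq> L'"
        using lat_subset b L'(1) by blast
      then show ?thesis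
        using L'(3) by blast
    qed
  qed
qed

lemma lat_between_cases:
  assumes q: "q \<noteq> 0" "v q = 1"
    and L': "L' = lat u w" "smul2 q ` lat a b \<subset> L'" "L' \<subset> lat a b"
  shows "(\<exists>r\<in>\<O>. L' = lat (lin 1 a r b) (smul2 unif b)) \<or> L' = lat b (smul2 unif a)"
proof -
  have normal: "L' = lat (lin 1 a' (\<beta>' / \<alpha>') b') (smul2 unif b')"
    if ab': "lat a b = lat a' b'" and z: "z \<in> L'" "z = lin \<alpha>' a' \<beta>' b'" "\<beta>' \<in> \<O>" "val_unit \<alpha>'"
    for a' b' z \<alpha>' \<beta>'
  proof -
    have "L' = lat z (smul2 q b')"
      using lat_between[OF q L'(1) _ _ z] L' ab' by simp
    also have "smul2 q b' = smul2 (q / unif) (smul2 unif b')"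
      using unif by (simp add: smul2_smul2)
    also have "z = smul2 \<alpha>' (lin 1 a' (\<beta>' / \<alpha>') b')"
      using z(2,4) unfolding val_unit_def by (simp add: lin_def smul2_def prod_eq_iff field_simps)
    finally show ?thesis
      using val_unit_divide[OF q(1) unif(1)] q(2) unif(2) z(4)
      by (simp add: lat_unit_left lat_unit_right)
  qed
  obtain z where z: "z \<in> L'" "z \<notin> smul2 q ` lat a b"
    using L'(2) by blast
  then obtain \<alpha> \<beta> where \<alpha>\<beta>: "\<alpha> \<in> \<O>" "\<beta> \<in> \<O>" "z = lin \<alpha> a \<beta> b"
    using L'(3) by (blast elim: lat_memE)
  have not_both: "\<not> (vge v \<alpha> 1 \<and> vge v \<beta> 1)"
  proof
    assume "vge v \<alpha> 1 \<and> vge v \<beta> 1"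
    then have "lin (\<alpha> / q) a (\<beta> / q) b \<in> lat a b"
      using vge_one_divide[OF q] lat_memI by blast
    moreover have "z = smul2 q (lin (\<alpha> / q) a (\<beta> / q) b)"
      using \<alpha>\<beta> q by (simp add: lin_def smul2_def prod_eq_iff field_simps)
    ultimately show False
      using z by blast
  qed
  consider "val_unit \<alpha>" | "vge v \<alpha> 1" "val_unit \<beta>"
    using not_both val_ring_cases \<alpha>\<beta> by blast
  then show ?thesis
  proof cases
    case 1
    then show ?thesis
      using normal[OF refl z(1) \<alpha>\<beta>(3,2)] divide_unit_val_ring \<alpha>\<beta>(2) by blast
  next
    case 2
    have "z = lin \<beta> b \<alpha> a"
      using \<alpha>\<beta> by (simp add: lin_def algebra_simps)
    then have "L' = lat (lin 1 b (\<alpha> / \<beta>) a) (smul2 unif a)"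
      using normal[OF lat_swap z(1) _ \<alpha>\<beta>(1)] 2(2) by blast
    also have "lin 1 b (\<alpha> / \<beta>) a = lin 1 b (\<alpha> / \<beta> / unif) (smul2 unif a)"
      using unif by (simp add: lin_def smul2_def)
    also have "lat \<dots> (smul2 unif a) = lat b (smul2 unif a)"
    proof (rule lat_shear, rule vge_one_divide[OF unif])
      show "vge v (\<alpha> / \<beta>) 1"
        using vge_mult[OF 2(1), of "inverse \<beta>" 0] val_unit_inverse[OF 2(2)]
        by (simp add: val_ring_iff divide_inverse)
    qed
    finally show ?thesis ..
  qed
qed

lemma neighbour_cases:
  assumes cd: "det2 c d \<noteq> 0" and adj: "tree_adj v (hclass (lat c d)) x"
  shows "(\<exists>r\<in>\<O>. x = hclass (lat (lin 1 c r d) (smul2 unif d))) \<or> x = hclass (lat d (smul2 unif c))"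
proof -
  obtain q L L' where q: "q \<noteq> 0" "v q = 1" and L: "L \<in> hclass (lat c d)" and L': "L' \<in> x"
    and between: "smul2 q ` L \<subset> L'" "L' \<subset> L" and x: "x \<in> tree_V v"
    using adj unfolding tree_adj_def by blast
  obtain t where t: "t \<noteq> 0" "L = lat (smul2 t c) (smul2 t d)"
    using L smul2_lat by (metis hclass_memE)
  obtain u w where L'_eq: "L' = lat u w" and x_eq: "x = hclass L'"
    using x L' by (rule tree_V_memE)
  have hclass_t: "hclass (lat (smul2 t a) (smul2 t b)) = hclass (lat a b)" for a b
    using t(1) by (rule hclass_lat_smul2)
  from lat_between_cases[OF q L'_eq between[unfolded t(2)]]
  consider r where "r \<in> \<O>" "L' = lat (lin 1 (smul2 t c) r (smul2 t d)) (smul2 unif (smul2 t d))"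
    | "L' = lat (smul2 t d) (smul2 unif (smul2 t c))"
    by blast
  then show ?thesis
  proof cases
    case 1
    then have "x = hclass (lat (smul2 t (lin 1 c r d)) (smul2 t (smul2 unif d)))"
      using x_eq by (simp add: smul2_lin smul2_smul2 mult.commute)
    then have "x = hclass (lat (lin 1 c r d) (smul2 unif d))"
      using hclass_t by simp
    then show ?thesis
      using 1(1) by blast
  next
    case 2
    have "smul2 unif (smul2 t c) = smul2 t (smul2 unif c)"
      by (simp add: smul2_smul2 mult.commute)
    then show ?thesis
      using 2 x_eq hclass_t by simp
  qed
qed

section \<open>Rays\<close>

lemma limit_of_small_steps:
  fixes s :: "nat \<Rightarrow> 'a"
  assumes steps: "\<And>n. vge v (s (Suc n) - s n) (int n)"
  obtains l where "\<And>n. vge v (l - s n) (int n)"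
proof -
  have tail: "vge v (s m - s n) (int n)" if "n \<le> m" for m n
    using that
  proof (induction m rule: dec_induct)
    case (step m)
    have "vge v (s (Suc m) - s m) (int n)"
      using vge_mono[OF steps[of m]] step.hyps(1) by simp
    then have "vge v (s m - s n + (s (Suc m) - s m)) (int n)"
      using vge_add step.IH by blast
    then show ?case
      by simp
  qed simp
  have tail_sym: "vge v (s m - s n) (int (min m n))" for m n
  proof (cases "n \<le> m")
    case True
    then show ?thesis
      using tail by (simp add: min_def)
  next
    case False
    then show ?thesis
      using tail[of m n] vge_minus[of "s n - s m"] by (simp add: min_def)
  qed
  have "\<forall>k::int. \<exists>N. \<forall>m\<ge>N. \<forall>n\<ge>N. vge v (s m - s n) k"
  proof (intro allI exI impI)
    fix k :: int and m n :: nat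
    assume "nat k \<le> m" "nat k \<le> n"
    then have "k \<le> int (min m n)"
      by linarith
    then show "vge v (s m - s n) k"
      using tail_sym vge_mono by blast
  qed
  then obtain l where l: "\<forall>k::int. \<exists>N. \<forall>n\<ge>N. vge v (s n - l) k"
    using cauchy_has_limit by blast
  have "vge v (l - s n) (int n)" for n
  proof -
    obtain N where "\<forall>m\<ge>N. vge v (s m - l) (int n)"
      using l by blast
    then have "vge v (s (max N n) - s n) (int n)" "vge v (s (max N n) - l) (int n)"
      using tail by simp_all
    then have "vge v ((s (max N n) - s n) - (s (max N n) - l)) (int n)"
      by (rule vge_diff)
    then show ?thesis
      by simp
  qed
  then show thesis
    by (rule that)
qed

text \<open>The vertex \<open>[\<langle>a + s b, \<pi>\<^sup>n b\<rangle>]\<close>; for \<open>n = 0, 1, 2, \<dots>\<close> these vertices form the ray from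
  \<open>[\<langle>a, b\<rangle>]\<close> towards the end given by the line \<open>F (a + s b)\<close>.\<close>
definition std_vertex :: "'a \<times> 'a \<Rightarrow> 'a \<times> 'a \<Rightarrow> 'a \<Rightarrow> nat \<Rightarrow> ('a \<times> 'a) set set" where
  "std_vertex a b s n = hclass (lat (lin 1 a s b) (smul2 (unif ^ n) b))"

lemma std_vertex_shift:
  assumes "vge v u (int n)"
  shows "std_vertex a b (s + u) n = std_vertex a b s n"
proof -
  have "lin 1 a (s + u) b = lin 1 (lin 1 a s b) (u / unif ^ n) (smul2 (unif ^ n) b)"
    using unif_power(1)[of n] by (simp add: lin_def smul2_def algebra_simps)
  then show ?thesis
    unfolding std_vertex_def using lat_shear vge_divide_unif_power[OF assms] by simp
qed

lemma ray_start:
  assumes "tree_ray v y"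
  obtains a b where "det2 a b \<noteq> 0" "y 0 = std_vertex a b 0 0" "y 1 = std_vertex a b 0 1"
proof -
  have y0: "y 0 \<in> tree_V v" and adj: "tree_adj v (y 0) (y 1)"
    using assms unfolding tree_ray_def by auto
  obtain c d where cd: "det2 c d \<noteq> 0" "y 0 = hclass (lat c d)"
    using y0 by (rule tree_V_latE)
  have "tree_adj v (hclass (lat c d)) (y 1)"
    using adj cd(2) by simp
  from neighbour_cases[OF cd(1) this]
  consider r where "r \<in> \<O>" "y 1 = hclass (lat (lin 1 c r d) (smul2 unif d))"
    | "y 1 = hclass (lat d (smul2 unif c))"
    by blast
  then show thesis
  proof cases
    case 1
    show thesis
    proof (rule that)
      show "det2 (lin 1 c r d) d \<noteq> 0"
        using cd(1) by (simp add: det2_shear)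
      show "y 0 = std_vertex (lin 1 c r d) d 0 0" "y 1 = std_vertex (lin 1 c r d) d 0 1"
        using cd(2) 1 lat_shear unfolding std_vertex_def by simp_all
    qed
  next
    case 2
    show thesis
    proof (rule that)
      show "det2 d c \<noteq> 0"
        using cd(1) det2_swap[of c d] by simp
      show "y 0 = std_vertex d c 0 0" "y 1 = std_vertex d c 0 1"
        using cd(2) 2 lat_swap unfolding std_vertex_def by simp_all
    qed
  qed
qed

lemma ray_step:
  assumes ray: "tree_ray v y" and ab: "det2 a b \<noteq> 0"
    and y: "y n = std_vertex a b s n" "y (Suc n) = std_vertex a b s (Suc n)"
  shows "\<exists>r\<in>\<O>. y (Suc (Suc n)) = std_vertex a b (s + r * unif ^ Suc n) (Suc (Suc n))"
proof -
  define c where "c = lin 1 a s b"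
  define d where "d = smul2 (unif ^ Suc n) b"
  have cd: "det2 c d \<noteq> 0"
    unfolding c_def d_def using ab unif(1) by (simp add: det2_smul2_right det2_shear)
  have adj: "tree_adj v (hclass (lat c d)) (y (Suc (Suc n)))"
    using ray y(2) unfolding tree_ray_def std_vertex_def c_def d_def by metis
  from neighbour_cases[OF cd adj]
  consider r where "r \<in> \<O>" "y (Suc (Suc n)) = hclass (lat (lin 1 c r d) (smul2 unif d))"
    | "y (Suc (Suc n)) = hclass (lat d (smul2 unif c))"
    by blast
  then show ?thesis
  proof cases
    case 1
    have "lin 1 c r d = lin 1 a (s + r * unif ^ Suc n) b" "smul2 unif d = smul2 (unif ^ Suc (Suc n)) b"
      unfolding c_def d_def by (simp_all add: lin_def smul2_def algebra_simps)
    then show ?thesis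
      using 1 unfolding std_vertex_def by auto
  next
    case 2
    \<comment> \<open>the other neighbour is the previous vertex, which a ray cannot revisit\<close>
    have "d = smul2 unif (smul2 (unif ^ n) b)"
      unfolding d_def by (simp add: smul2_smul2)
    then have "hclass (lat d (smul2 unif c)) = hclass (lat (smul2 (unif ^ n) b) c)"
      using hclass_lat_smul2[OF unif(1)] by simp
    then have "y (Suc (Suc n)) = y n"
      using 2 y(1) lat_swap unfolding std_vertex_def c_def by simp
    moreover have "inj y"
      using ray unfolding tree_ray_def by blast
    ultimately show ?thesis
      by (simp add: inj_eq)
  qed
qed

theorem ray_normal_form:
  assumes ray: "tree_ray v y"
  obtains w b where "det2 w b \<noteq> 0" "\<And>k. y k = hclass (lat w (smul2 (unif ^ k) b))"
proof -
  obtain a b where ab: "det2 a b \<noteq> 0" "y 0 = std_vertex a b 0 0" "y 1 = std_vertex a b 0 1"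
    using ray by (rule ray_start)
  define P where "P n s \<longleftrightarrow> y n = std_vertex a b s n \<and> y (Suc n) = std_vertex a b s (Suc n)" for n s
  have "\<exists>s. P (Suc n) s \<and> vge v (s - s0) (int n)" if Pn: "P n s0" for n s0
  proof -
    obtain r where r: "r \<in> \<O>" "y (Suc (Suc n)) = std_vertex a b (s0 + r * unif ^ Suc n) (Suc (Suc n))"
      using ray_step[OF ray ab(1)] Pn unfolding P_def by blast
    have "vge v (r * unif ^ Suc n) (int n)"
      using vge_mono[OF vge_mult_unif_power[OF r(1), of "Suc n"], of "int n"] by simp
    moreover have "std_vertex a b (s0 + r * unif ^ Suc n) (Suc n) = std_vertex a b s0 (Suc n)"
      by (rule std_vertex_shift[OF vge_mult_unif_power[OF r(1)]])
    ultimately show ?thesis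
      using Pn r(2) unfolding P_def by (intro exI[of _ "s0 + r * unif ^ Suc n"]) simp
  qed
  moreover have "P 0 0"
    unfolding P_def using ab by simp
  ultimately obtain s where s: "\<And>n. P n (s n)" "\<And>n. vge v (s (Suc n) - s n) (int n)"
    using dependent_nat_choice[of P "\<lambda>n s0 s. vge v (s - s0) (int n)"] by blast
  obtain l where l: "\<And>n. vge v (l - s n) (int n)"
    using limit_of_small_steps[OF s(2)] by blast
  show thesis
  proof (rule that)
    show "det2 (lin 1 a l b) b \<noteq> 0"
      using ab(1) by (simp add: det2_shear)
    fix k
    have "y k = std_vertex a b (s k) k"
      using s(1) unfolding P_def by blast
    also have "\<dots> = std_vertex a b (s k + (l - s k)) k"
      using std_vertex_shift[OF l] by metis
    finally have "y k = std_vertex a b l k"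
      by simp
    then show "y k = hclass (lat (lin 1 a l b) (smul2 (unif ^ k) b))"
      unfolding std_vertex_def by simp
  qed
qed

lemma lat_rescale:
  assumes \<delta>: "\<delta> \<noteq> 0" "\<gamma> / \<delta> \<in> \<O>" and \<beta>: "\<beta> \<noteq> 0" "\<epsilon> \<noteq> 0" "v \<beta> = v (\<delta> * \<epsilon>)"
  shows "lat (smul2 \<delta> w) (lin \<gamma> w \<beta> b) = smul2 \<delta> ` lat w (smul2 \<epsilon> b)"
proof -
  have "lin \<gamma> w \<beta> b = lin 1 (smul2 \<beta> b) (\<gamma> / \<delta>) (smul2 \<delta> w)"
    using \<delta>(1) by (simp add: lin_def smul2_def)
  then have "lat (smul2 \<delta> w) (lin \<gamma> w \<beta> b) = lat (smul2 \<beta> b) (smul2 \<delta> w)"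
    using lat_shear[OF \<delta>(2)] lat_swap by metis
  also have "smul2 \<beta> b = smul2 (\<beta> / (\<delta> * \<epsilon>)) (smul2 (\<delta> * \<epsilon>) b)"
    using \<delta> \<beta> by (simp add: smul2_smul2)
  also have "lat \<dots> (smul2 \<delta> w) = lat (smul2 (\<delta> * \<epsilon>) b) (smul2 \<delta> w)"
    using lat_unit_left val_unit_divide \<delta> \<beta> by simp
  also have "\<dots> = smul2 \<delta> ` lat w (smul2 \<epsilon> b)"
    by (simp add: smul2_lat smul2_smul2 lat_swap)
  finally show ?thesis .
qed

lemma hclass_lat_rebase:
  assumes \<delta>: "\<delta> \<noteq> 0" and \<beta>: "\<beta> \<noteq> 0"
    and k: "\<alpha> = 0 \<or> v \<delta> - v \<alpha> \<le> int k" and i: "int k + v \<beta> = v \<delta> + int i"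
  shows "hclass (lat (smul2 \<delta> w) (smul2 (unif ^ k) (lin \<alpha> w \<beta> b))) = hclass (lat w (smul2 (unif ^ i) b))"
proof -
  have "smul2 (unif ^ k) (lin \<alpha> w \<beta> b) = lin (unif ^ k * \<alpha>) w (unif ^ k * \<beta>) b"
    by (simp add: smul2_def lin_def algebra_simps)
  moreover have "unif ^ k * \<alpha> / \<delta> \<in> \<O>"
  proof (cases "\<alpha> = 0")
    case False
    then have "v (unif ^ k * \<alpha> / \<delta>) = int k + v \<alpha> - v \<delta>"
      using \<delta> unif_power by (simp add: v_divide v_mult)
    then show ?thesis
      using k False unfolding val_ring_iff vge_def by simp
  qed simp
  moreover have "v (unif ^ k * \<beta>) = v (\<delta> * unif ^ i)"
    using \<delta> \<beta> i unif unif_power(2) by (simp add: v_mult)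
  ultimately have "lat (smul2 \<delta> w) (smul2 (unif ^ k) (lin \<alpha> w \<beta> b)) = smul2 \<delta> ` lat w (smul2 (unif ^ i) b)"
    using lat_rescale \<delta> \<beta> unif_power(1) by simp
  then show ?thesis
    using hclass_smul2[OF \<delta>] by simp
qed

lemma ray_tail_rebase:
  assumes wb: "det2 w b \<noteq> 0" and m1: "m1 = lin \<alpha> w \<beta> b" and m2: "m2 = lin \<alpha>2 w \<beta>2 b"
    and \<beta>: "\<beta> \<noteq> 0" "\<beta>2 = 0 \<or> v \<beta> \<le> v \<beta>2" and m12: "det2 m1 m2 \<noteq> 0"
  obtains w' b' i j where "det2 w' b' \<noteq> 0" "lat w' b' = lat m1 m2"
    "\<And>n. hclass (lat w (smul2 (unif ^ (i + n)) b)) = hclass (lat w' (smul2 (unif ^ (j + n)) b'))"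
proof -
  define t where "t = \<beta>2 / \<beta>"
  define \<delta> where "\<delta> = \<alpha>2 - t * \<alpha>"
  have t: "t \<in> \<O>"
    using \<beta> unfolding t_def val_ring_iff vge_def by (cases "\<beta>2 = 0") (auto simp: v_divide)
  have "det2 m1 m2 = - (\<beta> * \<delta>) * det2 w b"
    using \<beta>(1) unfolding m1 m2 \<delta>_def t_def by (simp add: det2_lin field_simps)
  then have \<delta>: "\<delta> \<noteq> 0"
    using m12 by auto
  have "lin 1 m2 (- t) m1 = smul2 \<delta> w"
    unfolding m1 m2 \<delta>_def t_def using \<beta>(1) by (simp add: lin_def smul2_def prod_eq_iff field_simps)
  then have lat_m: "lat (smul2 \<delta> w) m1 = lat m1 m2"
    using lat_shear[of "- t" m2 m1] t lat_swap by (metis val_ring_minus)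
  have det': "det2 (smul2 \<delta> w) m1 \<noteq> 0"
    using \<delta> \<beta>(1) wb unfolding m1 by (simp add: det2_def smul2_def lin_def algebra_simps)
  \<comment> \<open>\<open>j\<close> makes \<open>\<pi>\<^sup>j \<alpha> / \<delta>\<close> integral and \<open>i \<ge> 0\<close>; \<open>i\<close> balances the valuations in \<open>hclass_lat_rebase\<close>\<close>
  define j where "j = nat (v \<delta> - v \<beta>) + nat (v \<delta> - v \<alpha>)"
  define i where "i = nat (v \<beta> + int j - v \<delta>)"
  have "hclass (lat w (smul2 (unif ^ (i + n)) b)) = hclass (lat (smul2 \<delta> w) (smul2 (unif ^ (j + n)) m1))"
    for n
    unfolding m1 using hclass_lat_rebase[OF \<delta> \<beta>(1), of \<alpha> "j + n" "i + n"]
    by (simp add: i_def j_def)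
  then show thesis
    using that det' lat_m by blast
qed

theorem ray_eventually_in_basis:
  assumes ray: "tree_ray v y" and m12: "det2 m1 m2 \<noteq> 0"
  obtains w b i j where "det2 w b \<noteq> 0" "lat w b = lat m1 m2"
    "\<And>n. y (i + n) = hclass (lat w (smul2 (unif ^ (j + n)) b))"
proof -
  obtain w b where wb: "det2 w b \<noteq> 0" and y: "\<And>k. y k = hclass (lat w (smul2 (unif ^ k) b))"
    using ray_normal_form[OF ray] by blast
  define D where "D = det2 w b"
  define \<alpha>1 where "\<alpha>1 = det2 m1 b / D"
  define \<beta>1 where "\<beta>1 = det2 w m1 / D"
  define \<alpha>2 where "\<alpha>2 = det2 m2 b / D"
  define \<beta>2 where "\<beta>2 = det2 w m2 / D"
  have m: "m1 = lin \<alpha>1 w \<beta>1 b" "m2 = lin \<alpha>2 w \<beta>2 b"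
    unfolding \<alpha>1_def \<beta>1_def \<alpha>2_def \<beta>2_def D_def using lin_coordinates[OF wb] by blast+
  have "det2 m1 m2 = (\<alpha>1 * \<beta>2 - \<beta>1 * \<alpha>2) * det2 w b"
    unfolding m by (rule det2_lin)
  then have "\<beta>1 \<noteq> 0 \<or> \<beta>2 \<noteq> 0"
    using m12 by auto
  then consider "\<beta>1 \<noteq> 0" "\<beta>2 = 0 \<or> v \<beta>1 \<le> v \<beta>2" | "\<beta>2 \<noteq> 0" "\<beta>1 = 0 \<or> v \<beta>2 \<le> v \<beta>1"
    by linarith
  then show thesis
  proof cases
    case 1
    then show thesis
      using ray_tail_rebase[OF wb m 1 m12] that y by metis
  next
    case 2
    have "det2 m2 m1 \<noteq> 0"
      using m12 det2_swap[of m1 m2] by simp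
    then show thesis
      using ray_tail_rebase[OF wb m(2,1) 2] that y lat_swap[of m1 m2] by metis
  qed
qed

end

section \<open>The action of \<open>GL\<^sub>2(F)\<close>\<close>

definition mat_inv :: "'a::field \<times> 'a \<times> 'a \<times> 'a \<Rightarrow> 'a \<times> 'a \<times> 'a \<times> 'a" where
  "mat_inv M = (case M of (a, b, c, d) \<Rightarrow> (d / mat_det M, - b / mat_det M, - c / mat_det M, a / mat_det M))"

definition mat_mult :: "'a::field \<times> 'a \<times> 'a \<times> 'a \<Rightarrow> 'a \<times> 'a \<times> 'a \<times> 'a \<Rightarrow> 'a \<times> 'a \<times> 'a \<times> 'a" where
  "mat_mult A B = (case A of (a, b, c, d) \<Rightarrow> case B of (a', b', c', d') \<Rightarrow>
      (a * a' + b * c', a * b' + b * d', c * a' + d * c', c * b' + d * d'))"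

definition mat_of_cols :: "'a::field \<times> 'a \<Rightarrow> 'a \<times> 'a \<Rightarrow> 'a \<times> 'a \<times> 'a \<times> 'a" where
  "mat_of_cols u w = (fst u, fst w, snd u, snd w)"

lemma mat_act_inv:
  assumes "mat_det M \<noteq> 0"
  shows "mat_act (mat_inv M) (mat_act M u) = u" "mat_act M (mat_act (mat_inv M) u) = u"
proof -
  obtain a b c d where M: "M = (a, b, c, d)"
    by (cases M)
  have D: "a * d - b * c \<noteq> 0"
    using assms M by (simp add: mat_det_def)
  show "mat_act (mat_inv M) (mat_act M u) = u" "mat_act M (mat_act (mat_inv M) u) = u"
    unfolding M mat_inv_def mat_act_def mat_det_def using D
    by (simp_all add: prod_eq_iff divide_simps, simp_all add: algebra_simps)
qed

lemma mat_det_inv: "mat_det (mat_inv M) = inverse (mat_det M)"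
proof (cases M)
  case (fields a b c d)
  define D where "D = a * d - b * c"
  have "mat_det (mat_inv M) = d / D * (a / D) - (- b / D) * (- c / D)"
    unfolding fields D_def by (simp add: mat_inv_def mat_det_def)
  also have "\<dots> = D / (D * D)"
    unfolding D_def by (simp add: diff_divide_distrib)
  also have "\<dots> = inverse D"
    by (cases "D = 0") (simp_all add: field_simps)
  also have "\<dots> = inverse (mat_det M)"
    unfolding fields D_def mat_det_def by simp
  finally show ?thesis .
qed

lemma mat_act_mult: "mat_act (mat_mult A B) u = mat_act A (mat_act B u)"
  by (cases A; cases B) (simp add: mat_mult_def mat_act_def algebra_simps)

lemma mat_det_mult: "mat_det (mat_mult A B) = mat_det A * mat_det B"
  by (cases A; cases B) (simp add: mat_mult_def mat_det_def algebra_simps)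

lemma mat_det_of_cols: "mat_det (mat_of_cols u w) = det2 u w"
  by (simp add: mat_of_cols_def mat_det_def det2_def)

lemma mat_act_of_cols: "mat_act (mat_of_cols u w) (1, 0) = u" "mat_act (mat_of_cols u w) (0, 1) = w"
  by (simp_all add: mat_of_cols_def mat_act_def)

lemma mat_act_lin: "mat_act M (lin c a d b) = lin c (mat_act M a) d (mat_act M b)"
  by (cases M) (simp add: mat_act_def lin_def algebra_simps)

lemma mat_act_smul2: "mat_act M (smul2 c a) = smul2 c (mat_act M a)"
  by (cases M) (simp add: mat_act_def smul2_def algebra_simps)

lemma det2_mat_act: "det2 (mat_act M a) (mat_act M b) = mat_det M * det2 a b"
  by (cases M) (simp add: mat_act_def mat_det_def det2_def algebra_simps)

lemma inj_mat_act: "mat_det M \<noteq> 0 \<Longrightarrow> inj (mat_act M)"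
  by (metis injI mat_act_inv(1))

lemma basis_transfer_matrix:
  assumes "det2 w1 b1 \<noteq> 0" "det2 w2 b2 \<noteq> 0"
  obtains M where "mat_det M \<noteq> 0" "mat_act M w1 = w2" "mat_act M b1 = b2"
proof
  let ?C = "mat_of_cols w1 b1"
  have C: "mat_det ?C \<noteq> 0"
    using assms(1) by (simp add: mat_det_of_cols)
  show "mat_det (mat_mult (mat_of_cols w2 b2) (mat_inv ?C)) \<noteq> 0"
    using assms(2) C by (simp add: mat_det_mult mat_det_of_cols mat_det_inv)
  have "mat_act (mat_inv ?C) w1 = (1, 0)" "mat_act (mat_inv ?C) b1 = (0, 1)"
    using mat_act_inv(1)[OF C] mat_act_of_cols by metis+
  then show "mat_act (mat_mult (mat_of_cols w2 b2) (mat_inv ?C)) w1 = w2"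
    "mat_act (mat_mult (mat_of_cols w2 b2) (mat_inv ?C)) b1 = b2"
    by (simp_all add: mat_act_mult mat_act_of_cols)
qed

lemma vert_act_hclass: "vert_act M (hclass L) = hclass (mat_act M ` L)"
proof -
  have "vert_act M (hclass L) = {mat_act M ` (smul2 c ` L) | c. c \<noteq> 0}"
    unfolding vert_act_def hclass_def by blast
  also have "\<dots> = {smul2 c ` (mat_act M ` L) | c. c \<noteq> 0}"
    by (simp add: image_image mat_act_smul2)
  finally show ?thesis
    unfolding hclass_def .
qed

lemma vert_act_inv: "mat_det M \<noteq> 0 \<Longrightarrow> vert_act (mat_inv M) (vert_act M x) = x"
  and vert_act_inv': "mat_det M \<noteq> 0 \<Longrightarrow> vert_act M (vert_act (mat_inv M) x) = x"
  unfolding vert_act_def by (simp_all add: image_image mat_act_inv)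

context local_field
begin

lemma mat_act_lat: "mat_act M ` lat a b = lat (mat_act M a) (mat_act M b)"
  unfolding lat_def mat_act_lin[symmetric] by blast

lemma vert_act_lat: "vert_act M (hclass (lat a b)) = hclass (lat (mat_act M a) (mat_act M b))"
  by (simp only: vert_act_hclass mat_act_lat)

lemma vert_act_tree_V: "mat_det M \<noteq> 0 \<Longrightarrow> x \<in> tree_V v \<Longrightarrow> vert_act M x \<in> tree_V v"
  by (elim tree_V_latE) (simp add: vert_act_lat det2_mat_act tree_V_lat)

lemma vert_act_adj:
  assumes M: "mat_det M \<noteq> 0" and adj: "tree_adj v x y"
  shows "tree_adj v (vert_act M x) (vert_act M y)"
proof -
  obtain p L L' where p: "p \<noteq> 0" "v p = 1" and L: "L \<in> x" "L' \<in> y"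
    and between: "smul2 p ` L \<subset> L'" "L' \<subset> L" and V: "x \<in> tree_V v" "y \<in> tree_V v"
    using adj unfolding tree_adj_def by blast
  have "mat_act M ` L \<in> vert_act M x" "mat_act M ` L' \<in> vert_act M y"
    using L unfolding vert_act_def by auto
  moreover have "smul2 p ` (mat_act M ` L) = mat_act M ` (smul2 p ` L)"
    by (simp add: image_image mat_act_smul2)
  moreover have "mat_act M ` (smul2 p ` L) \<subset> mat_act M ` L'" "mat_act M ` L' \<subset> mat_act M ` L"
    using between inj_mat_act[OF M] by (metis image_strict_mono inj_on_subset top_greatest)+
  ultimately show ?thesis
    unfolding tree_adj_def using p V vert_act_tree_V[OF M] by metis
qed

lemma vert_act_relpow:
  assumes M: "mat_det M \<noteq> 0" and "(x, y) \<in> {(a, b). tree_adj v a b} ^^ n"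
  shows "(vert_act M x, vert_act M y) \<in> {(a, b). tree_adj v a b} ^^ n"
  using assms(2)
proof (induction n arbitrary: y)
  case (Suc n)
  then obtain z where "(x, z) \<in> {(a, b). tree_adj v a b} ^^ n" "tree_adj v z y"
    by auto
  then show ?case
    using Suc.IH vert_act_adj[OF M] by auto
qed simp

lemma tree_d_vert_act:
  assumes M: "mat_det M \<noteq> 0"
  shows "tree_d v (vert_act M x) (vert_act M y) = tree_d v x y"
proof -
  have "mat_det (mat_inv M) \<noteq> 0"
    using M by (simp add: mat_det_inv)
  then have "(vert_act M x, vert_act M y) \<in> {(a, b). tree_adj v a b} ^^ n \<longleftrightarrow>
      (x, y) \<in> {(a, b). tree_adj v a b} ^^ n" for n
    using vert_act_relpow[OF M] vert_act_relpow[of "mat_inv M"] vert_act_inv(1)[OF M] by metis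
  then show ?thesis
    unfolding tree_d_def by simp
qed

lemma vert_act_Ghat:
  assumes M: "mat_det M \<noteq> 0"
  shows "vert_act M \<in> Ghat v e"
proof -
  have "bij_betw (vert_act M) (tree_V v) (tree_V v)"
    by (rule bij_betw_byWitness[where f' = "vert_act (mat_inv M)"])
      (auto simp: M vert_act_inv vert_act_inv' vert_act_tree_V mat_det_inv)
  then have "vert_act M \<in> tree_Aut v"
    unfolding tree_Aut_def using tree_d_vert_act[OF M] by blast
  \<comment> \<open>\<open>vert_act M\<close> is its own local witness on every ball\<close>
  then show ?thesis
    unfolding Ghat_def PGL2_tree_def using M by blast
qed

lemma same_end_of_tails:
  assumes "\<And>n. y (i1 + n) = f (j1 + n)" "\<And>n. z (i2 + n) = f (j2 + n)"
  shows "same_end y z"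
  unfolding same_end_def
proof (intro exI allI)
  fix n
  have "y (i1 + (j2 - j1) + n) = f (max j1 j2 + n)"
    using assms(1)[of "j2 - j1 + n"] by (simp add: add.assoc max_def)
  also have "\<dots> = z (i2 + (j1 - j2) + n)"
    using assms(2)[of "j1 - j2 + n"] by (simp add: add.assoc max_def)
  finally show "y (i1 + (j2 - j1) + n) = z (i2 + (j1 - j2) + n)" .
qed

end

theorem mainTheorem8:
  fixes v :: "'a::field \<Rightarrow> int" and e :: nat and x0 :: "('a \<times> 'a) set set"
  assumes "nonarch_local_field v"
    and "1 \<le> e"
    and "x0 \<in> tree_V v"
  shows "\<forall>y z. tree_ray v y \<longrightarrow> tree_ray v z \<longrightarrow>
           (\<exists>g\<in>Ghat v e. g x0 = x0 \<and> same_end (g \<circ> y) z)"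
proof (intro allI impI)
  interpret local_field v
    using assms(1) by unfold_locales
  fix y z
  assume y: "tree_ray v y" and z: "tree_ray v z"
  obtain m1 m2 where m: "det2 m1 m2 \<noteq> 0" "x0 = hclass (lat m1 m2)"
    using assms(3) by (rule tree_V_latE)
  obtain w1 b1 i1 j1 where Y: "det2 w1 b1 \<noteq> 0" "lat w1 b1 = lat m1 m2"
    "\<And>n. y (i1 + n) = hclass (lat w1 (smul2 (unif ^ (j1 + n)) b1))"
    using ray_eventually_in_basis[OF y m(1)] by blast
  obtain w2 b2 i2 j2 where Z: "det2 w2 b2 \<noteq> 0" "lat w2 b2 = lat m1 m2"
    "\<And>n. z (i2 + n) = hclass (lat w2 (smul2 (unif ^ (j2 + n)) b2))"
    using ray_eventually_in_basis[OF z m(1)] by blast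
  obtain M where M: "mat_det M \<noteq> 0" "mat_act M w1 = w2" "mat_act M b1 = b2"
    using basis_transfer_matrix[OF Y(1) Z(1)] by blast
  have "vert_act M x0 = x0"
    using m(2) Y(2) Z(2) M by (metis vert_act_lat)
  moreover have "same_end (vert_act M \<circ> y) z"
  proof (rule same_end_of_tails[where f = "\<lambda>k. hclass (lat w2 (smul2 (unif ^ k) b2))"])
    show "(vert_act M \<circ> y) (i1 + n) = hclass (lat w2 (smul2 (unif ^ (j1 + n)) b2))" for n
      using Y(3) M by (simp add: vert_act_lat mat_act_smul2)
    show "z (i2 + n) = hclass (lat w2 (smul2 (unif ^ (j2 + n)) b2))" for n
      by (rule Z(3))
  qed
  ultimately show "\<exists>g\<in>Ghat v e. g x0 = x0 \<and> same_end (g \<circ> y) z"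
    using vert_act_Ghat[OF M(1)] by blast
qed

end
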